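(* Let $p$ be an odd prime and let $n,s$ be positive integers such that $2n/s\geq 3$ is an odd integer; put $q=p^n$, $d=p^s$. For any $k=\alpha^d+\alpha\in\mathbb{F}_{q^2}$ (with $\alpha\in\mathbb{F}_{q^2}$), the map \[ \phi_k\big((a^d+a,x)\big)=\big(a^d+a+k,\ x+a^d\alpha+a\alpha^d+\alpha^{d+1}\big) \] is an automorphism of the graph $\mathcal{A}_{q^2,d}$.
   Context: The map $x\mapsto x^d+x$ is a bijection of $\mathbb{F}_{q^2}$. The graph $\mathcal{A}_{q^2,d}$ has vertex set $\mathbb{F}_{q^2}\times\mathbb{F}_{q^2}$; writing vertices as $(a^d+a,x)$ and $(b^d+b,y)$ with $a,b,x,y\in\mathbb{F}_{q^2}$ (uniquely), two distinct vertices are adjacent iff $a^db+ab^d=x+y$. *)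

theory Defs
  imports "HOL-Computational_Algebra.Primes"
begin

definition trace_map :: "nat \<Rightarrow> 'a::field \<Rightarrow> 'a" where
  "trace_map d a = a ^ d + a"

definition A_adj :: "nat \<Rightarrow> 'a::field \<times> 'a \<Rightarrow> 'a \<times> 'a \<Rightarrow> bool" where
  "A_adj d v w \<longleftrightarrow> v \<noteq> w \<and>
     (let a = inv (trace_map d) (fst v); b = inv (trace_map d) (fst w)
      in a ^ d * b + a * b ^ d = snd v + snd w)"

definition graph_automorphism :: "('v \<Rightarrow> 'v \<Rightarrow> bool) \<Rightarrow> ('v \<Rightarrow> 'v) \<Rightarrow> bool" where
  "graph_automorphism adj f \<longleftrightarrow> bij f \<and> (\<forall>v w. adj v w \<longleftrightarrow> adj (f v) (f w))"

definition phi_map :: "nat \<Rightarrow> 'a::field \<Rightarrow> 'a \<times> 'a \<Rightarrow> 'a \<times> 'a" where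
  "phi_map d \<alpha> v =
     (let a = inv (trace_map d) (fst v)
      in (fst v + trace_map d \<alpha>, snd v + a ^ d * \<alpha> + a * \<alpha> ^ d + \<alpha> ^ (d + 1)))"

end

theory Submission
  imports Defs "HOL-Number_Theory.Residues"
begin

text \<open>
  Let \<open>T = trace_map d\<close>. Since \<open>d\<close> is a power of the characteristic, \<open>T\<close> is additive, and
  \<open>T c = 0\<close> means \<open>c\<^sup>d = -c\<close>; iterating \<open>m = 2n/s\<close> times (with \<open>d\<close> and \<open>m\<close> odd) gives
  \<open>c = c\<^bsup>d\<^sup>m\<^esup> = -c\<close>, so \<open>T\<close> is a bijection as the field has odd characteristic.
  Writing a vertex as \<open>(T a, x)\<close>, the map \<open>\<phi>\<^sub>k\<close> sends it to \<open>(T (a + \<alpha>), x + \<sigma> a)\<close> with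
  \<open>\<sigma> a = a\<^sup>d \<alpha> + a \<alpha>\<^sup>d + \<alpha>\<^bsup>d+1\<^esup>\<close>, and additivity of the Frobenius power gives
  \<open>(a+\<alpha>)\<^sup>d (b+\<alpha>) + (a+\<alpha>) (b+\<alpha>)\<^sup>d = a\<^sup>d b + a b\<^sup>d + \<sigma> a + \<sigma> b\<close>, so adjacency is preserved.
\<close>

definition field_mult_group :: "'a::field monoid" where
  "field_mult_group = \<lparr>carrier = - {0}, monoid.mult = (*), one = 1\<rparr>"

lemma comm_group_field_mult_group: "comm_group (field_mult_group :: 'a::field monoid)"
proof (rule comm_groupI)
  show "\<exists>y\<in>carrier field_mult_group. y \<otimes>\<^bsub>field_mult_group\<^esub> x = \<one>\<^bsub>field_mult_group\<^esub>"
    if "x \<in> carrier field_mult_group" for x :: 'a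
    using that by (intro bexI[of _ "inverse x"]) (auto simp: field_mult_group_def)
qed (auto simp: field_mult_group_def mult_ac)

lemma field_mult_group_pow: "x [^]\<^bsub>field_mult_group\<^esub> (n::nat) = x ^ n"
  by (induction n) (simp_all add: field_mult_group_def mult.commute)

lemma power_card_UNIV_eq_self:
  fixes x :: "'a::{field,finite}"
  shows "x ^ card (UNIV :: 'a set) = x"
proof (cases "x = 0")
  case False
  let ?G = "field_mult_group :: 'a monoid"
  have carrier: "carrier ?G = UNIV - {0}" and one: "\<one>\<^bsub>?G\<^esub> = 1"
    by (auto simp: field_mult_group_def)
  have "x [^]\<^bsub>?G\<^esub> card (carrier ?G) = \<one>\<^bsub>?G\<^esub>"
    using False by (intro comm_group.power_order_eq_one comm_group_field_mult_group)
      (simp_all add: carrier)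
  then have "x ^ (card (UNIV :: 'a set) - 1) = 1"
    by (simp only: field_mult_group_pow carrier one card_Diff_singleton finite_UNIV UNIV_I)
  have "x ^ card (UNIV :: 'a set) = x ^ Suc (card (UNIV :: 'a set) - 1)"
    using finite_UNIV_card_ge_0[where 'a='a] by simp
  also have "\<dots> = x * x ^ (card (UNIV :: 'a set) - 1)"
    by (rule power_Suc)
  finally show ?thesis
    using \<open>x ^ (card (UNIV :: 'a set) - 1) = 1\<close> by simp
qed (simp add: finite_UNIV_card_ge_0)

lemma CHAR_eq_if_card_UNIV_eq_prime_power:
  assumes "prime p" and "card (UNIV :: 'a::{field,finite} set) = p ^ m"
  shows "CHAR('a) = p"
proof -
  have "prime CHAR('a)"
    by (simp add: finite_imp_CHAR_pos prime_CHAR_semidom)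
  moreover have "CHAR('a) dvd p ^ m"
    using CHAR_dvd_CARD[where 'a='a] assms(2) by simp
  ultimately show ?thesis
    using assms(1) prime_dvd_power primes_dvd_imp_eq by blast
qed

lemma eq_0_if_power_eq_uminus:
  fixes c :: "'a::{field,finite}"
  assumes "c ^ d = - c" and "odd d" and "odd m" and "d ^ m = card (UNIV :: 'a set)"
    and "(2::'a) \<noteq> 0"
  shows "c = 0"
proof -
  have iterate: "c ^ (d ^ k) = (-1) ^ k * c" for k
  proof (induction k)
    case (Suc k)
    have "c ^ (d ^ Suc k) = (c ^ d) ^ (d ^ k)"
      by (simp add: mult.commute flip: power_mult)
    also have "\<dots> = - (c ^ (d ^ k))"
      using assms(1,2) by simp
    finally show ?case
      using Suc by simp
  qed simp
  have "c = - c"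
    using iterate[of m] power_card_UNIV_eq_self[of c] assms(3,4) by simp
  then have "2 * c = 0"
    by (simp add: algebra_simps)
  then show ?thesis
    using assms(5) by simp
qed

lemma bij_trace_map:
  fixes d m :: nat
  assumes additive: "\<And>x y :: 'a::{field,finite}. (x + y) ^ d = x ^ d + y ^ d"
    and "odd d" and "odd m" and "d ^ m = card (UNIV :: 'a set)" and "(2::'a) \<noteq> 0"
  shows "bij (trace_map d :: 'a \<Rightarrow> 'a)"
proof -
  have "inj (trace_map d :: 'a \<Rightarrow> 'a)"
  proof (rule injI)
    fix x y :: 'a
    assume "trace_map d x = trace_map d y"
    then have "(x - y) ^ d = - (x - y)"
      using additive[of "x - y" y] by (simp add: trace_map_def algebra_simps)
    from eq_0_if_power_eq_uminus[OF this assms(2-5)] show "x = y"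
      by simp
  qed
  then show ?thesis
    by (simp add: bij_def finite_UNIV_inj_surj)
qed

lemma frobenius_form_shift:
  fixes a b \<alpha> :: "'a::comm_ring_1"
  assumes additive: "\<And>x y :: 'a. (x + y) ^ d = x ^ d + y ^ d"
  shows "(a + \<alpha>) ^ d * (b + \<alpha>) + (a + \<alpha>) * (b + \<alpha>) ^ d =
    (a ^ d * b + a * b ^ d) + (a ^ d * \<alpha> + a * \<alpha> ^ d + \<alpha> ^ (d + 1))
      + (b ^ d * \<alpha> + b * \<alpha> ^ d + \<alpha> ^ (d + 1))"
  by (simp add: additive algebra_simps)

lemma phi_map_eq:
  fixes \<alpha> :: "'a::field"
  assumes additive: "\<And>x y :: 'a. (x + y) ^ d = x ^ d + y ^ d"
    and bij: "bij (trace_map d :: 'a \<Rightarrow> 'a)"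
    and a_def: "a = inv_into UNIV (trace_map d) (fst v)"
  shows "phi_map d \<alpha> v =
    (trace_map d (a + \<alpha>), snd v + a ^ d * \<alpha> + a * \<alpha> ^ d + \<alpha> ^ (d + 1))"
proof -
  have "fst v = trace_map d a"
    using bij a_def by (simp add: bij_is_surj surj_f_inv_f)
  then have "fst v + trace_map d \<alpha> = trace_map d (a + \<alpha>)"
    by (simp add: trace_map_def additive add_ac)
  then show ?thesis
    unfolding phi_map_def Let_def a_def[symmetric] by simp
qed

lemma inj_phi_map:
  fixes \<alpha> :: "'a::field"
  assumes additive: "\<And>x y :: 'a. (x + y) ^ d = x ^ d + y ^ d"
    and bij: "bij (trace_map d :: 'a \<Rightarrow> 'a)"
  shows "inj (phi_map d \<alpha>)"
proof (rule injI)
  let ?T = "trace_map d :: 'a \<Rightarrow> 'a"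
  fix v w :: "'a \<times> 'a"
  define a b where "a = inv_into UNIV ?T (fst v)" and "b = inv_into UNIV ?T (fst w)"
  assume "phi_map d \<alpha> v = phi_map d \<alpha> w"
  then have "?T (a + \<alpha>) = ?T (b + \<alpha>)"
    and snd_eq: "snd v + a ^ d * \<alpha> + a * \<alpha> ^ d = snd w + b ^ d * \<alpha> + b * \<alpha> ^ d"
    by (simp_all add: phi_map_eq[OF additive bij a_def] phi_map_eq[OF additive bij b_def])
  then have "a = b"
    using bij by (simp add: bij_is_inj inj_eq)
  then have "fst v = fst w"
    using bij unfolding a_def b_def by (metis bij_is_surj surj_f_inv_f)
  moreover have "snd v = snd w"
    using snd_eq by (simp add: \<open>a = b\<close>)
  ultimately show "v = w"
    by (simp add: prod_eq_iff)
qed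

lemma graph_automorphism_phi_map:
  fixes \<alpha> :: "'a::{field,finite}"
  assumes additive: "\<And>x y :: 'a. (x + y) ^ d = x ^ d + y ^ d"
    and bij: "bij (trace_map d :: 'a \<Rightarrow> 'a)"
  shows "graph_automorphism (A_adj d) (phi_map d \<alpha>)"
proof -
  let ?T = "trace_map d :: 'a \<Rightarrow> 'a" and ?\<phi> = "phi_map d \<alpha>"
  have inj: "inj ?\<phi>"
    using inj_phi_map[OF additive bij] .
  have "A_adj d v w \<longleftrightarrow> A_adj d (?\<phi> v) (?\<phi> w)" for v w
  proof -
    define a b where "a = inv_into UNIV ?T (fst v)" and "b = inv_into UNIV ?T (fst w)"
    define \<sigma> where "\<sigma> c = c ^ d * \<alpha> + c * \<alpha> ^ d + \<alpha> ^ (d + 1)" for c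
    note \<phi>_v = phi_map_eq[OF additive bij a_def] and \<phi>_w = phi_map_eq[OF additive bij b_def]
    have "inv_into UNIV ?T (fst (?\<phi> v)) = a + \<alpha>" and "inv_into UNIV ?T (fst (?\<phi> w)) = b + \<alpha>"
      using bij by (simp_all add: \<phi>_v \<phi>_w bij_is_inj)
    moreover have "snd (?\<phi> v) + snd (?\<phi> w) = (snd v + snd w) + \<sigma> a + \<sigma> b"
      by (simp add: \<phi>_v \<phi>_w \<sigma>_def add_ac)
    moreover have "(a + \<alpha>) ^ d * (b + \<alpha>) + (a + \<alpha>) * (b + \<alpha>) ^ d
        = (a ^ d * b + a * b ^ d) + \<sigma> a + \<sigma> b"
      unfolding \<sigma>_def by (rule frobenius_form_shift[OF additive])
    ultimately show ?thesis
      using inj by (simp add: A_adj_def Let_def inj_eq a_def[symmetric] b_def[symmetric])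
  qed
  with inj show ?thesis
    unfolding graph_automorphism_def by (simp add: bij_def finite_UNIV_inj_surj)
qed

theorem lemma8:
  fixes p n s :: nat and \<alpha> :: "'a::{field,finite}"
  assumes "prime p" and "odd p" and "n > 0" and "s > 0"
    and "s dvd 2 * n" and "odd (2 * n div s)" and "2 * n div s \<ge> 3"
    and "card (UNIV :: 'a set) = (p ^ n) ^ 2"
  shows "graph_automorphism (A_adj (p ^ s)) (phi_map (p ^ s) \<alpha>)"
proof -
  have "card (UNIV :: 'a set) = p ^ (n * 2)"
    using assms(8) by (simp add: power_mult)
  then have char: "CHAR('a) = p"
    using CHAR_eq_if_card_UNIV_eq_prime_power assms(1) by blast
  have additive: "(x + y) ^ p ^ s = x ^ p ^ s + y ^ p ^ s" for x y :: 'a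
    using freshmans_dream' char assms(1) by blast
  have "(p ^ s) ^ (2 * n div s) = card (UNIV :: 'a set)"
    using assms(5,8) by (simp add: power_mult[symmetric] mult.commute)
  moreover have "(2::'a) \<noteq> 0"
  proof -
    have "\<not> p dvd 2"
      using primes_dvd_imp_eq[OF assms(1) two_is_prime_nat] assms(2) by auto
    then show ?thesis
      using of_nat_eq_0_iff_char_dvd[of 2, where 'a='a] char by simp
  qed
  ultimately have "bij (trace_map (p ^ s) :: 'a \<Rightarrow> 'a)"
    using bij_trace_map[OF additive] assms(2,6) by simp
  then show ?thesis
    using graph_automorphism_phi_map[OF additive] by blast
qed

end
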